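(* Let $\|\cdot\|$ be a $C^2$ and strictly convex norm on $\mathbb{R}^2$, let $\alpha_0\in(0,\pi/2]$ be defined by $\sin(\alpha_0)=\inf_{x\in\partial B_{\|\cdot\|}(0,1)}\langle\nu_x,x/|x|\rangle$, and let $\gamma:I\to\mathbb{R}^2$ be a $\|\cdot\|$-self-contracted curve on an interval $I\subset\mathbb{R}$. Then for all $s\leq t\leq u$ in $I$, setting $x_0=\gamma(s)$, $y=\gamma(t)$, $y'=\gamma(u)$, and assuming $y\neq x_0$ and $y'\neq x_0$, $$\Big\langle\frac{y-x_0}{|y-x_0|},\frac{y'-x_0}{|y'-x_0|}\Big\rangle\geq-\cos(\alpha_0).$$
   Context: $\langle\cdot,\cdot\rangle$ and $|\cdot|$ are the Euclidean inner product and norm on $\mathbb{R}^2$. The norm $\|\cdot\|$ is $C^2$ on $\mathbb{R}^2\setminus\{0\}$ and its unit sphere $\partial B_{\|\cdot\|}(0,1)=\{\|x\|=1\}$ is a $C^2$ curve of strictly positive curvature. For $x$ on the unit sphere, $\nu_x$ is the outer Euclidean unit normal to the unit sphere at $x$. A curve $\gamma:I\to\mathbb{R}^2$ (not necessarily continuous) is $\|\cdot\|$-self-contracted if for every $[a,b]\subset I$ the function $t\mapsto\|\gamma(t)-\gamma(b)\|$ is non-increasing on $[a,b]$. *)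

theory Defs
  imports "HOL-Analysis.Analysis"
begin

text \<open>A norm on R^2 (R^2 modelled as real^2, Euclidean inner product and norm are the library ones).\<close>
definition is_norm :: "(real^2 \<Rightarrow> real) \<Rightarrow> bool" where
  "is_norm N \<longleftrightarrow> (\<forall>x. 0 \<le> N x) \<and> (\<forall>x. N x = 0 \<longleftrightarrow> x = 0)
     \<and> (\<forall>c x. N (c *\<^sub>R x) = \<bar>c\<bar> * N x) \<and> (\<forall>x y. N (x + y) \<le> N x + N y)"

text \<open>Strict convexity: the unit sphere contains no segment (midpoints of distinct unit vectors lie strictly inside).\<close>
definition strictly_convex_norm :: "(real^2 \<Rightarrow> real) \<Rightarrow> bool" where
  "strictly_convex_norm N \<longleftrightarrow>
     (\<forall>x y. N x = 1 \<longrightarrow> N y = 1 \<longrightarrow> x \<noteq> y \<longrightarrow> N ((1/2) *\<^sub>R (x + y)) < 1)"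

definition C2_on :: "(real^2) set \<Rightarrow> (real^2 \<Rightarrow> real) \<Rightarrow> bool" where
  "C2_on S f \<longleftrightarrow> (\<exists>g H. (\<forall>x\<in>S. (f has_derivative (\<lambda>h. g x \<bullet> h)) (at x))
      \<and> (\<forall>x\<in>S. (g has_derivative blinfun_apply (H x)) (at x))
      \<and> continuous_on S (H :: real^2 \<Rightarrow> ((real^2) \<Rightarrow>\<^sub>L (real^2))))"

definition grad :: "(real^2 \<Rightarrow> real) \<Rightarrow> real^2 \<Rightarrow> real^2" where
  "grad f x = (THE g. (f has_derivative (\<lambda>h. g \<bullet> h)) (at x))"

text \<open>Outer Euclidean unit normal to the unit sphere {N = 1} at x.\<close>
definition outer_normal :: "(real^2 \<Rightarrow> real) \<Rightarrow> real^2 \<Rightarrow> real^2" where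
  "outer_normal N x = (1 / norm (grad N x)) *\<^sub>R grad N x"

definition self_contracted :: "(real^2 \<Rightarrow> real) \<Rightarrow> real set \<Rightarrow> (real \<Rightarrow> real^2) \<Rightarrow> bool" where
  "self_contracted N I \<gamma> \<longleftrightarrow>
     (\<forall>a b. a \<in> I \<longrightarrow> b \<in> I \<longrightarrow> a \<le> b \<longrightarrow>
        (\<forall>t1 t2. a \<le> t1 \<longrightarrow> t1 \<le> t2 \<longrightarrow> t2 \<le> b \<longrightarrow>
           N (\<gamma> t2 - \<gamma> b) \<le> N (\<gamma> t1 - \<gamma> b)))"

end

theory Submission
  imports Defs
begin

text \<open>
  Put \<open>x\<^sub>0 = \<gamma> s\<close>, \<open>y = \<gamma> t\<close>, \<open>y' = \<gamma> u\<close> and \<open>r = N (x\<^sub>0 - y')\<close>. Self-contraction gives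
  \<open>N (y - y') \<le> r\<close>, so \<open>(y - y')/r\<close> lies in the unit ball while \<open>z = (x\<^sub>0 - y')/r\<close> lies
  on the unit sphere. By convexity of the norm the ball lies behind the tangent line at \<open>z\<close>,
  i.e. \<open>y - x\<^sub>0\<close> makes an angle of at least \<open>\<pi>/2\<close> with the outer normal \<open>\<nu>\<close> at \<open>z\<close>. On the
  other hand \<open>y' - x\<^sub>0\<close> points in the direction \<open>-z\<close>, which makes an angle of at most
  \<open>\<pi>/2 - \<alpha>\<^sub>0\<close> with \<open>-\<nu>\<close> by definition of \<open>\<alpha>\<^sub>0\<close>. Hence the angle between the two directions
  is at most \<open>\<pi> - \<alpha>\<^sub>0\<close>.
\<close>

lemma inner_ge_neg_cos_halfspace_cone:
  fixes a b n :: "'a::real_inner"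
  assumes unit: "norm a = 1" "norm b = 1" "norm n = 1"
    and halfspace: "a \<bullet> n \<ge> 0" and cone: "b \<bullet> n \<ge> sin \<alpha>"
    and \<alpha>: "0 \<le> \<alpha>" "\<alpha> \<le> pi/2"
  shows "a \<bullet> b \<ge> - cos \<alpha>"
proof -
  define q where "q = b \<bullet> n"
  define b_perp where "b_perp = b - q *\<^sub>R n"
  have sin_nonneg: "sin \<alpha> \<ge> 0" and cos_nonneg: "cos \<alpha> \<ge> 0"
    using \<alpha> by (auto intro: sin_ge_zero cos_ge_zero)
  have "b \<bullet> b = 1" "n \<bullet> n = 1"
    using unit(2,3) by (simp_all add: norm_eq_1)
  then have "(norm b_perp)\<^sup>2 = 1 - q\<^sup>2"
    unfolding b_perp_def q_def power2_norm_eq_inner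
    by (simp add: inner_diff_left inner_diff_right inner_commute power2_eq_square algebra_simps)
  also have "\<dots> \<le> (cos \<alpha>)\<^sup>2"
    using power_mono[OF cone sin_nonneg, of 2] unfolding q_def cos_squared_eq by simp
  finally have "norm b_perp \<le> cos \<alpha>"
    using cos_nonneg by (meson norm_ge_zero power2_le_imp_le)
  moreover have "a \<bullet> b_perp \<ge> - norm b_perp"
    using Cauchy_Schwarz_ineq2[of a b_perp] unit(1) by (simp add: abs_le_iff)
  moreover have "q * (a \<bullet> n) \<ge> 0"
    using halfspace cone sin_nonneg unfolding q_def by simp
  moreover have "a \<bullet> b = q * (a \<bullet> n) + a \<bullet> b_perp"
    unfolding b_perp_def by (simp add: inner_diff_right)
  ultimately show ?thesis by linarith
qed

lemma convex_on_has_derivative_above_tangent: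
  fixes f :: "'a::real_normed_vector \<Rightarrow> real"
  assumes convex: "convex_on UNIV f" and deriv: "(f has_derivative f') (at z)"
  shows "f z + f' (w - z) \<le> f w"
proof -
  define \<phi> where "\<phi> h = f (z + h *\<^sub>R (w - z))" for h :: real
  have "convex_on UNIV \<phi>"
  proof (rule convex_onI)
    fix t x y :: real assume "0 < t" "t < 1"
    moreover have "z + ((1 - t) *\<^sub>R x + t *\<^sub>R y) *\<^sub>R (w - z)
        = (1 - t) *\<^sub>R (z + x *\<^sub>R (w - z)) + t *\<^sub>R (z + y *\<^sub>R (w - z))"
      by (simp add: algebra_simps)
    ultimately show "\<phi> ((1 - t) *\<^sub>R x + t *\<^sub>R y) \<le> (1 - t) * \<phi> x + t * \<phi> y"
      unfolding \<phi>_def using convex_onD[OF convex] by simp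
  qed simp
  moreover have "(\<phi> has_field_derivative f' (w - z)) (at 0)"
  proof -
    have "((\<lambda>h::real. z + h *\<^sub>R (w - z)) has_derivative (\<lambda>h. h *\<^sub>R (w - z))) (at 0)"
      by (auto intro!: derivative_eq_intros)
    from has_derivative_compose[OF this] deriv
    have "(\<phi> has_derivative (\<lambda>h. f' (h *\<^sub>R (w - z)))) (at 0)"
      unfolding \<phi>_def o_def by simp
    moreover have "(\<lambda>h. f' (h *\<^sub>R (w - z))) = (*) (f' (w - z))"
      using has_derivative_linear[OF deriv] by (auto simp: linear_scale)
    ultimately show ?thesis by (simp add: has_field_derivative_def)
  qed
  ultimately have "\<phi> 1 - \<phi> 0 \<ge> f' (w - z) * (1 - 0)"
    by (intro convex_on_imp_above_tangent) auto
  then show ?thesis unfolding \<phi>_def by simp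
qed

lemma is_norm_convex_on:
  assumes "is_norm N"
  shows "convex_on UNIV N"
proof (rule convex_onI)
  fix t :: real and x y :: "real^2" assume "0 < t" "t < 1"
  have "N ((1 - t) *\<^sub>R x + t *\<^sub>R y) \<le> N ((1 - t) *\<^sub>R x) + N (t *\<^sub>R y)"
    using assms unfolding is_norm_def by blast
  also have "\<dots> = (1 - t) * N x + t * N y"
    using assms \<open>0 < t\<close> \<open>t < 1\<close> unfolding is_norm_def by simp
  finally show "N ((1 - t) *\<^sub>R x + t *\<^sub>R y) \<le> (1 - t) * N x + t * N y" .
qed simp

lemma is_norm_gradient_inner_nonpos:
  assumes norm: "is_norm N" and "p \<noteq> 0"
    and deriv: "(N has_derivative (\<lambda>h. g \<bullet> h)) (at ((1 / N p) *\<^sub>R p))"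
    and le: "N q \<le> N p"
  shows "g \<bullet> (q - p) \<le> 0"
proof -
  have hom: "\<And>c x. N (c *\<^sub>R x) = \<bar>c\<bar> * N x" and "N p > 0"
    using norm \<open>p \<noteq> 0\<close> unfolding is_norm_def by (auto simp: less_le)
  with le have "N ((1 / N p) *\<^sub>R p) + g \<bullet> ((1 / N p) *\<^sub>R q - (1 / N p) *\<^sub>R p)
      \<le> N ((1 / N p) *\<^sub>R q)"
    by (intro convex_on_has_derivative_above_tangent[OF is_norm_convex_on[OF norm] deriv])
  moreover have "N ((1 / N p) *\<^sub>R q) \<le> 1" "N ((1 / N p) *\<^sub>R p) = 1"
    using hom \<open>N p > 0\<close> le by (simp_all add: divide_le_eq)
  ultimately have "g \<bullet> ((1 / N p) *\<^sub>R (q - p)) \<le> 0"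
    by (simp add: scaleR_diff_right)
  with \<open>N p > 0\<close> show ?thesis
    by (simp add: divide_le_0_iff)
qed

lemma grad_eqI:
  assumes "(f has_derivative (\<lambda>h. g \<bullet> h)) (at x)"
  shows "grad f x = g"
  unfolding grad_def
proof (rule the_equality)
  fix g' assume "(f has_derivative (\<lambda>h. g' \<bullet> h)) (at x)"
  from has_derivative_unique[OF this assms] have "\<And>h. g' \<bullet> h = g \<bullet> h" by metis
  from this[of "g' - g"] have "(g' - g) \<bullet> (g' - g) = 0" by (simp add: inner_diff_left)
  then show "g' = g" by simp
qed (fact assms)

lemma INF_outer_normal_radial_le:
  assumes "N x = 1"
  shows "(INF x\<in>{x. N x = 1}. outer_normal N x \<bullet> ((1 / norm x) *\<^sub>R x))
    \<le> outer_normal N x \<bullet> ((1 / norm x) *\<^sub>R x)"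
proof (rule cInf_lower)
  show "bdd_below ((\<lambda>x. outer_normal N x \<bullet> ((1 / norm x) *\<^sub>R x)) ` {x. N x = 1})"
  proof (rule bdd_belowI2)
    fix x
    have "norm (outer_normal N x) \<le> 1"
      unfolding outer_normal_def by (cases "grad N x = 0") auto
    moreover have "norm ((1 / norm x) *\<^sub>R x) \<le> 1"
      by (cases "x = 0") auto
    ultimately have "\<bar>outer_normal N x \<bullet> ((1 / norm x) *\<^sub>R x)\<bar> \<le> 1"
      by (metis Cauchy_Schwarz_ineq2 mult_le_one norm_ge_zero order_trans)
    then show "- 1 \<le> outer_normal N x \<bullet> ((1 / norm x) *\<^sub>R x)" by linarith
  qed
qed (use assms in simp)

lemma self_contracted_le:
  assumes "self_contracted N I \<gamma>" "s \<in> I" "u \<in> I" "s \<le> t" "t \<le> u"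
  shows "N (\<gamma> t - \<gamma> u) \<le> N (\<gamma> s - \<gamma> u)"
  using assms unfolding self_contracted_def by (meson order_refl order_trans)

theorem lemma3p1:
  fixes N :: "real^2 \<Rightarrow> real" and \<gamma> :: "real \<Rightarrow> real^2" and I :: "real set"
    and \<alpha>0 s t u :: real
  assumes "is_norm N"
    and "C2_on (- {0}) N"
    and "strictly_convex_norm N"
    and "\<alpha>0 \<in> {0<..pi/2}"
    and "sin \<alpha>0 = (INF x\<in>{x. N x = 1}. outer_normal N x \<bullet> ((1 / norm x) *\<^sub>R x))"
    and "is_interval I"
    and "self_contracted N I \<gamma>"
    and "s \<in> I" and "t \<in> I" and "u \<in> I" and "s \<le> t" and "t \<le> u"
    and "\<gamma> t \<noteq> \<gamma> s" and "\<gamma> u \<noteq> \<gamma> s"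
  shows "((1 / norm (\<gamma> t - \<gamma> s)) *\<^sub>R (\<gamma> t - \<gamma> s)) \<bullet>
           ((1 / norm (\<gamma> u - \<gamma> s)) *\<^sub>R (\<gamma> u - \<gamma> s)) \<ge> - cos \<alpha>0"
proof -
  define p where "p = \<gamma> s - \<gamma> u"
  define z where "z = (1 / N p) *\<^sub>R p"
  have "p \<noteq> 0" using assms(14) unfolding p_def by simp
  then have "N p > 0" "N z = 1"
    using assms(1) unfolding z_def is_norm_def by (auto simp: less_le)
  then have "z \<noteq> 0" using assms(1) unfolding is_norm_def by (metis zero_neq_one)
  with assms(2) obtain g where deriv: "(N has_derivative (\<lambda>h. g \<bullet> h)) (at z)"
    unfolding C2_on_def by blast
  have "(1 / norm z) *\<^sub>R z = (1 / norm p) *\<^sub>R p"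
    using \<open>N p > 0\<close> unfolding z_def by simp
  also have "\<dots> = - ((1 / norm (\<gamma> u - \<gamma> s)) *\<^sub>R (\<gamma> u - \<gamma> s))"
    unfolding p_def by (simp add: norm_minus_commute scaleR_right_diff_distrib)
  finally have direction: "(1 / norm z) *\<^sub>R z = - ((1 / norm (\<gamma> u - \<gamma> s)) *\<^sub>R (\<gamma> u - \<gamma> s))" .
  have cone: "sin \<alpha>0 \<le> outer_normal N z \<bullet> ((1 / norm z) *\<^sub>R z)"
    using INF_outer_normal_radial_le[of N z, OF \<open>N z = 1\<close>] assms(5) by simp
  then have "g \<noteq> 0"
    using assms(4) sin_gt_zero[of \<alpha>0] unfolding outer_normal_def grad_eqI[OF deriv] by auto
  have "g \<bullet> (\<gamma> t - \<gamma> s) \<le> 0"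
    using is_norm_gradient_inner_nonpos[OF assms(1) \<open>p \<noteq> 0\<close>, of g "\<gamma> t - \<gamma> u"] deriv
      self_contracted_le[OF assms(7,8,10-12)] unfolding z_def p_def by simp
  with \<open>g \<noteq> 0\<close> cone assms(4,13,14) show ?thesis
    unfolding direction outer_normal_def grad_eqI[OF deriv]
    by (intro inner_ge_neg_cos_halfspace_cone[where n = "- (1 / norm g) *\<^sub>R g"])
      (auto simp: inner_commute mult_le_0_iff divide_le_0_iff)
qed

end
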